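(* Let $G$ be a connected graph on $n\ge 4$ vertices with longest path of length $p$. Let $L_1,L_2,L_3$ be three paths of $G$, each having the vertex $u$ as an endpoint, such that any two of them intersect only in $u$. Suppose $\ell(L_1)=\lceil p/2\rceil$, $\ell(L_2)=p-\lceil p/2\rceil$ and $\ell(L_3)\ge\lceil p/2\rceil-1$. Then $u$ is a cut-vertex of $G$.
   Context: All graphs are finite, simple and undirected. $\ell(P)$ denotes the length (number of edges) of a path $P$. A cut-vertex is a vertex whose removal increases the number of components. *)

theory Defs
  imports Complex_Main
begin

definition graph :: "'a set \<Rightarrow> ('a \<Rightarrow> 'a \<Rightarrow> bool) \<Rightarrow> bool" where
  "graph V E \<longleftrightarrow> finite V \<and> (\<forall>x y. E x y \<longrightarrow> x \<in> V \<and> y \<in> V)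
     \<and> (\<forall>x y. E x y \<longrightarrow> E y x) \<and> (\<forall>x. \<not> E x x)"

definition is_path :: "'a set \<Rightarrow> ('a \<Rightarrow> 'a \<Rightarrow> bool) \<Rightarrow> 'a list \<Rightarrow> bool" where
  "is_path V E P \<longleftrightarrow> P \<noteq> [] \<and> distinct P \<and> set P \<subseteq> V
     \<and> (\<forall>i. Suc i < length P \<longrightarrow> E (P ! i) (P ! Suc i))"

definition path_len :: "'a list \<Rightarrow> nat" where
  "path_len P = length P - 1"

definition longest_path_length :: "'a set \<Rightarrow> ('a \<Rightarrow> 'a \<Rightarrow> bool) \<Rightarrow> nat \<Rightarrow> bool" where
  "longest_path_length V E p \<longleftrightarrow> (\<exists>P. is_path V E P \<and> path_len P = p)
     \<and> (\<forall>P. is_path V E P \<longrightarrow> path_len P \<le> p)"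

definition is_endpoint :: "'a \<Rightarrow> 'a list \<Rightarrow> bool" where
  "is_endpoint u P \<longleftrightarrow> P \<noteq> [] \<and> (u = hd P \<or> u = last P)"

definition reach_in :: "'a set \<Rightarrow> ('a \<Rightarrow> 'a \<Rightarrow> bool) \<Rightarrow> 'a \<Rightarrow> 'a \<Rightarrow> bool" where
  "reach_in S E x y \<longleftrightarrow> (x, y) \<in> {(a, b). a \<in> S \<and> b \<in> S \<and> E a b}\<^sup>* \<and> x \<in> S \<and> y \<in> S"

definition components :: "'a set \<Rightarrow> ('a \<Rightarrow> 'a \<Rightarrow> bool) \<Rightarrow> 'a set set" where
  "components S E = {{y. reach_in S E x y} | x. x \<in> S}"

definition connected_graph :: "'a set \<Rightarrow> ('a \<Rightarrow> 'a \<Rightarrow> bool) \<Rightarrow> bool" where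
  "connected_graph V E \<longleftrightarrow> V \<noteq> {} \<and> (\<forall>x\<in>V. \<forall>y\<in>V. reach_in V E x y)"

definition cut_vertex :: "'a set \<Rightarrow> ('a \<Rightarrow> 'a \<Rightarrow> bool) \<Rightarrow> 'a \<Rightarrow> bool" where
  "cut_vertex V E u \<longleftrightarrow> u \<in> V \<and> card (components (V - {u}) E) > card (components V E)"

end

(*
  Suppose G - u were connected. If l(L3) > 0, some path Q of G - u joins a vertex w of L3 to a
  vertex v of L1 or L2 and meets the legs only in its ends; say v lies on L1. Coming in along L2
  to u and leaving either along L3 to w, then along Q to v and along L1 to its end, or along L1
  to v, then back along Q to w and along L3 to its end, gives two paths of total length at least
  2 l(L2) + l(L1) + l(L3) + 2 > 2p, so one of them is longer than p. If v lies on L2, swap L1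
  and L2, which only helps since l(L1) >= l(L2). If l(L3) = 0 then p <= 2, so every vertex of
  the path L1 u L2 other than u is one of its ends, and since n >= 4 an edge of G - u leaves
  it at an end and extends it beyond length p.
*)
theory Submission
  imports Defs "HOL-Library.Transitive_Closure_Table"
begin

lemma is_path_iff_successively:
  "is_path V E P \<longleftrightarrow> P \<noteq> [] \<and> distinct P \<and> set P \<subseteq> V \<and> successively E P"
  unfolding is_path_def successively_conv_nth by blast

lemma is_path_rev:
  assumes "graph V E"
  shows "is_path V E (rev P) \<longleftrightarrow> is_path V E P"
proof -
  have converse: "(\<lambda>x y. E y x) = E" using assms unfolding graph_def by blast
  show ?thesis unfolding is_path_iff_successively successively_rev converse by simp
qed

lemma is_path_prefix: "is_path V E (xs @ y # zs) \<Longrightarrow> is_path V E (xs @ [y])"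
  unfolding is_path_iff_successively by (auto simp: successively_append_iff)

lemma is_path_suffix: "is_path V E (xs @ y # zs) \<Longrightarrow> is_path V E (y # zs)"
  unfolding is_path_iff_successively by (auto simp: successively_append_iff)

lemma is_path_glue:
  "is_path V E (xs @ [y]) \<Longrightarrow> is_path V E (y # zs) \<Longrightarrow> set xs \<inter> set (y # zs) = {} \<Longrightarrow>
    is_path V E (xs @ y # zs)"
  unfolding is_path_iff_successively by (auto simp: successively_append_iff successively_Cons)

lemma is_path_mono: "is_path S E P \<Longrightarrow> S \<subseteq> V \<Longrightarrow> is_path V E P"
  unfolding is_path_def by blast

lemma is_path_from_endpoint:
  assumes "graph V E" "is_path V E L" "is_endpoint u L"
  obtains T where "is_path V E (u # T)" "set (u # T) = set L" "length T = path_len L"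
proof -
  have "\<exists>L'. is_path V E L' \<and> set L' = set L \<and> length L' = length L \<and> hd L' = u"
  proof (cases "u = hd L")
    case False
    then have "u = hd (rev L)" using assms(3) unfolding is_endpoint_def by (simp add: hd_rev)
    then show ?thesis using assms(1,2) is_path_rev by (metis length_rev set_rev)
  qed (use assms(2) in blast)
  then obtain L' where "is_path V E L'" "set L' = set L" "length L' = length L" "hd L' = u" by blast
  moreover have "L' = u # tl L'" using calculation unfolding is_path_def by (cases L') auto
  ultimately show thesis using that[of "tl L'"] unfolding path_len_def by (metis length_tl)
qed

lemma reach_in_path:
  assumes "reach_in S E a b"
  obtains P where "is_path S E P" "hd P = a" "last P = b"
proof -
  define R where "R = (\<lambda>x y. x \<in> S \<and> y \<in> S \<and> E x y)"
  have "R\<^sup>*\<^sup>* a b" "a \<in> S" using assms unfolding reach_in_def R_def rtrancl_def by auto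
  then obtain xs where xs: "rtrancl_path R a xs b" "distinct (a # xs)"
    by (metis rtranclp_eq_rtrancl_path rtrancl_path_distinct)
  have "successively R (a # xs)"
    unfolding successively_conv_nth using rtrancl_path_nth[OF xs(1)] by auto
  then have "successively E (a # xs)" "set xs \<subseteq> S"
    using rtrancl_path_Range[OF xs(1)] by (auto simp: R_def elim: successively_mono)
  moreover have "last (a # xs) = b"
    using xs(1) by (cases "xs = []") (auto elim: rtrancl_path.cases dest: rtrancl_path_last)
  ultimately show thesis
    using that[of "a # xs"] xs(2) \<open>a \<in> S\<close> unfolding is_path_iff_successively by auto
qed

lemma connected_graph_bridge:
  assumes "connected_graph S E" "A \<subseteq> S" "B \<subseteq> S" "A \<noteq> {}" "B \<noteq> {}" "A \<inter> B = {}"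
  obtains w mid v where "w \<in> A" "v \<in> B" "set mid \<inter> (A \<union> B) = {}" "is_path S E (w # mid @ [v])"
proof -
  obtain a b where "a \<in> A" "b \<in> B" using assms(4,5) by blast
  then have "reach_in S E a b" using assms(1-3) unfolding connected_graph_def by blast
  then obtain P where P: "is_path S E P" "hd P = a" "last P = b" by (rule reach_in_path)
  have "\<exists>x \<in> set P. x \<in> A" using P(1,2) \<open>a \<in> A\<close> unfolding is_path_def by auto
  then obtain ys w zs where P_split: "P = ys @ w # zs" "w \<in> A" "\<forall>z \<in> set zs. z \<notin> A"
    by (rule split_list_last_propE)
  have "\<exists>x \<in> set zs. x \<in> B"
    using P(3) P_split \<open>b \<in> B\<close> assms(6) by (cases zs rule: rev_cases) auto
  then obtain mid v rest where zs_split: "zs = mid @ v # rest" "v \<in> B" "\<forall>y \<in> set mid. y \<notin> B"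
    by (rule split_list_first_propE)
  have "is_path S E (ys @ w # (mid @ v # rest))" using P(1) P_split(1) zs_split(1) by simp
  then have "is_path S E ((w # mid) @ v # rest)" by (simp add: is_path_suffix)
  then have "is_path S E ((w # mid) @ [v])" by (rule is_path_prefix)
  moreover have "set mid \<inter> (A \<union> B) = {}" using P_split(3) zs_split(1,3) by auto
  ultimately show thesis using that P_split(2) zs_split(2) by simp
qed

lemma components_connected_graph: "connected_graph V E \<Longrightarrow> components V E = {V}"
  unfolding connected_graph_def components_def reach_in_def by blast

lemma two_le_card_components:
  assumes "finite S" "a \<in> S" "b \<in> S" "\<not> reach_in S E a b"
  shows "2 \<le> card (components S E)"
proof -
  have "{y. reach_in S E a y} \<noteq> {y. reach_in S E b y}"
    using assms(3,4) unfolding reach_in_def by auto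
  moreover have "{{y. reach_in S E a y}, {y. reach_in S E b y}} \<subseteq> components S E"
    using assms(2,3) unfolding components_def by blast
  moreover have "finite (components S E)"
    using assms(1) by (rule finite_subset[rotated, OF finite_Pow_iff[THEN iffD2]])
      (auto simp: components_def reach_in_def)
  ultimately show ?thesis by (metis card_2_iff card_mono)
qed

lemma cut_vertex_if_disconnected:
  assumes "finite V" "connected_graph V E" "u \<in> V" "V - {u} \<noteq> {}"
    and "\<not> connected_graph (V - {u}) E"
  shows "cut_vertex V E u"
proof -
  obtain a b where "a \<in> V - {u}" "b \<in> V - {u}" "\<not> reach_in (V - {u}) E a b"
    using assms(4,5) unfolding connected_graph_def by blast
  then have "2 \<le> card (components (V - {u}) E)"
    using assms(1) by (intro two_le_card_components) auto
  then show ?thesis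
    unfolding cut_vertex_def using components_connected_graph[OF assms(2)] assms(3) by simp
qed

lemma exchange_paths:
  assumes "graph V E"
    and legs: "is_path V E (u # X)" "is_path V E (u # Y)" "is_path V E (u # Z)"
    and disjoint: "set X \<inter> set Y = {}" "set X \<inter> set Z = {}" "set Y \<inter> set Z = {}"
    and ends: "w \<in> set Z" "v \<in> set X"
    and bridge: "is_path V E (w # mid @ [v])" "set mid \<inter> insert u (set X \<union> set Y \<union> set Z) = {}"
  obtains P Q where "is_path V E P" "is_path V E Q"
    "2 * length Y + length X + length Z + 2 \<le> path_len P + path_len Q"
proof -
  obtain Xa Xb where X: "X = Xa @ v # Xb" using ends(2) by (meson split_list)
  obtain Za Zb where Z: "Z = Za @ w # Zb" using ends(1) by (meson split_list)
  have Y_rev: "is_path V E (rev Y @ [u])" using legs(2) is_path_rev[OF assms(1)] by fastforce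
  have X_pre: "is_path V E ((u # Xa) @ [v])" and X_suf: "is_path V E (v # Xb)"
    using legs(1) is_path_prefix[of V E "u # Xa"] is_path_suffix[of V E "u # Xa"] unfolding X by auto
  have Z_pre: "is_path V E ((u # Za) @ [w])" and Z_suf: "is_path V E (w # Zb)"
    using legs(3) is_path_prefix[of V E "u # Za"] is_path_suffix[of V E "u # Za"] unfolding Z by auto
  have bridge_rev: "is_path V E ((v # rev mid) @ [w])"
    using bridge(1) is_path_rev[OF assms(1)] by fastforce
  have distinct: "distinct (u # X)" "distinct (u # Y)" "distinct (u # Z)" "distinct (w # mid @ [v])"
    using legs bridge(1) unfolding is_path_def by blast+
  define P where "P = rev Y @ u # Za @ w # mid @ v # Xb"
  define Q where "Q = rev Y @ u # Xa @ v # rev mid @ w # Zb"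
  have "is_path V E (rev Y @ u # Za @ [w])"
    using is_path_glue[OF Y_rev Z_pre[simplified]] distinct disjoint unfolding Z by auto
  then have "is_path V E ((rev Y @ u # Za) @ w # mid @ [v])"
    using is_path_glue[of V E "rev Y @ u # Za" w "mid @ [v]"] bridge distinct disjoint
    unfolding Z X by auto
  then have "is_path V E P"
    using is_path_glue[of V E "rev Y @ u # Za @ w # mid" v Xb] X_suf bridge distinct disjoint
    unfolding P_def Z X by auto
  moreover have "is_path V E (rev Y @ u # Xa @ [v])"
    using is_path_glue[OF Y_rev X_pre[simplified]] distinct disjoint unfolding X by auto
  then have "is_path V E ((rev Y @ u # Xa) @ v # rev mid @ [w])"
    using is_path_glue[of V E "rev Y @ u # Xa" v "rev mid @ [w]"] bridge_rev bridge distinct disjoint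
    unfolding Z X by auto
  then have "is_path V E Q"
    using is_path_glue[of V E "rev Y @ u # Xa @ v # rev mid" w Zb] Z_suf bridge distinct disjoint
    unfolding Q_def Z X by auto
  moreover have "2 * length Y + length X + length Z + 2 \<le> path_len P + path_len Q"
    unfolding P_def Q_def path_len_def X Z by simp
  ultimately show thesis by (rule that)
qed

lemma three_legs_bound:
  assumes "graph V E" "connected_graph (V - {u}) E"
    and longest: "\<And>P. is_path V E P \<Longrightarrow> path_len P \<le> p"
    and legs: "is_path V E (u # T1)" "is_path V E (u # T2)" "is_path V E (u # T3)"
    and disjoint: "set T1 \<inter> set T2 = {}" "set T1 \<inter> set T3 = {}" "set T2 \<inter> set T3 = {}"
    and "T1 @ T2 \<noteq> []" "T3 \<noteq> []"
  shows "length T1 + length T2 + min (length T1) (length T2) + length T3 + 2 \<le> 2 * p"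
proof -
  have legs_in: "set T1 \<union> set T2 \<union> set T3 \<subseteq> V - {u}" using legs unfolding is_path_def by auto
  obtain w mid v where ends: "w \<in> set T3" "v \<in> set T1 \<union> set T2"
      and bridge: "set mid \<inter> (set T3 \<union> (set T1 \<union> set T2)) = {}"
        "is_path (V - {u}) E (w # mid @ [v])"
    by (rule connected_graph_bridge[OF assms(2), of "set T3" "set T1 \<union> set T2"])
      (use assms(10,11) disjoint legs_in in auto)
  have bridge_V: "is_path V E (w # mid @ [v])" using bridge(2) by (rule is_path_mono) blast
  have mid_avoids: "set mid \<inter> insert u (set T1 \<union> set T2 \<union> set T3) = {}"
    using bridge unfolding is_path_def by auto
  show ?thesis
  proof (cases "v \<in> set T1")
    case True
    obtain P Q where "is_path V E P" "is_path V E Q"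
      "2 * length T2 + length T1 + length T3 + 2 \<le> path_len P + path_len Q"
      by (rule exchange_paths[OF assms(1) legs disjoint ends(1) True]) (use bridge_V mid_avoids in auto)
    then show ?thesis using longest[of P] longest[of Q] by linarith
  next
    case False
    obtain P Q where "is_path V E P" "is_path V E Q"
      "2 * length T1 + length T2 + length T3 + 2 \<le> path_len P + path_len Q"
      by (rule exchange_paths[OF assms(1) legs(2,1,3) _ disjoint(3,2) ends(1)])
        (use bridge_V mid_avoids False ends(2) disjoint(1) in auto)
    then show ?thesis using longest[of P] longest[of Q] by linarith
  qed
qed

lemma short_legs_bound:
  assumes "graph V E" "connected_graph (V - {u}) E"
    and longest: "\<And>P. is_path V E P \<Longrightarrow> path_len P \<le> p"
    and legs: "is_path V E (u # T1)" "is_path V E (u # T2)" and disjoint: "set T1 \<inter> set T2 = {}"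
    and short: "length T1 \<le> 1" "length T2 \<le> 1"
    and "T1 @ T2 \<noteq> []" "\<not> V \<subseteq> insert u (set T1 \<union> set T2)"
  shows "length T1 + length T2 + 1 \<le> p"
proof -
  define W where "W = V - {u} - (set T1 \<union> set T2)"
  have legs_in: "set T1 \<union> set T2 \<subseteq> V - {u}" using legs unfolding is_path_def by auto
  obtain w mid v where ends: "w \<in> W" "v \<in> set T1 \<union> set T2"
      and bridge: "set mid \<inter> (W \<union> (set T1 \<union> set T2)) = {}" "is_path (V - {u}) E (w # mid @ [v])"
    by (rule connected_graph_bridge[OF assms(2), of W "set T1 \<union> set T2"])
      (use assms(9,10) legs_in in \<open>auto simp: W_def\<close>)
  have "W \<union> (set T1 \<union> set T2) = V - {u}" using legs_in unfolding W_def by blast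
  moreover have "set mid \<subseteq> V - {u}" using bridge(2) unfolding is_path_def by simp
  ultimately have "mid = []" using bridge(1) by (simp add: Int_absorb2)
  then have edge: "is_path V E [v, w]"
    using is_path_mono[OF bridge(2)] is_path_rev[OF assms(1), of "[w, v]"] by auto
  have w_new: "w \<noteq> u" "w \<noteq> v" "w \<notin> set T1" "w \<notin> set T2" using ends unfolding W_def by auto
  have extend: "length Y + 2 \<le> p" if "is_path V E [u, v]" "is_path V E (u # Y)" "v \<notin> set Y" "w \<notin> set Y"
    for Y
  proof -
    have "u \<notin> set Y" "u \<noteq> v" using that(1,2) unfolding is_path_def by auto
    then have "is_path V E (rev Y @ [u, v])"
      using is_path_glue[of V E "rev Y" u "[v]"] that is_path_rev[OF assms(1), of "u # Y"] by auto
    then have "is_path V E ((rev Y @ [u]) @ [v, w])"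
      using is_path_glue[of V E "rev Y @ [u]" v "[w]"] edge \<open>u \<notin> set Y\<close> \<open>u \<noteq> v\<close> that(3,4) w_new by auto
    from longest[OF this] show ?thesis unfolding path_len_def by simp
  qed
  show ?thesis
  proof (cases "v \<in> set T1")
    case True
    then have "T1 = [v]" using short(1) by (cases T1) auto
    moreover have "length T2 + 2 \<le> p"
      by (rule extend) (use legs \<open>T1 = [v]\<close> True disjoint w_new in auto)
    ultimately show ?thesis by simp
  next
    case False
    then have "v \<in> set T2" using ends(2) by blast
    then have "T2 = [v]" using short(2) by (cases T2) auto
    moreover have "length T1 + 2 \<le> p"
      by (rule extend) (use legs \<open>T2 = [v]\<close> \<open>v \<in> set T2\<close> disjoint w_new in auto)
    ultimately show ?thesis by simp
  qed
qed

lemma longest_path_length_pos: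
  assumes "connected_graph V E" "2 \<le> card V" "longest_path_length V E p"
  shows "0 < p"
proof -
  obtain x where x: "x \<in> V" using assms(1) unfolding connected_graph_def by blast
  have "V - {x} \<noteq> {}" using x assms(2) card_mono[of "{x}" V] by auto
  obtain w mid v where "is_path V E (w # mid @ [v])"
    by (rule connected_graph_bridge[OF assms(1), of "{x}" "V - {x}"]) (use x \<open>V - {x} \<noteq> {}\<close> in auto)
  then have "path_len (w # mid @ [v]) \<le> p" using assms(3) unfolding longest_path_length_def by blast
  then show ?thesis unfolding path_len_def by simp
qed

lemma nat_ceiling_half: "nat \<lceil>real p / 2\<rceil> = (p + 1) div 2"
proof -
  have "\<lceil>real p / 2\<rceil> = int ((p + 1) div 2)"
    unfolding ceiling_eq_iff by linarith
  then show ?thesis by simp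
qed

lemma three_legs_disconnect:
  assumes "graph V E" "4 \<le> card V" "0 < p"
    and longest: "\<And>P. is_path V E P \<Longrightarrow> path_len P \<le> p"
    and legs: "is_path V E (u # T1)" "is_path V E (u # T2)" "is_path V E (u # T3)"
    and disjoint: "set T1 \<inter> set T2 = {}" "set T1 \<inter> set T3 = {}" "set T2 \<inter> set T3 = {}"
    and lengths: "length T1 = (p + 1) div 2" "length T2 = p - (p + 1) div 2"
      "(p + 1) div 2 - 1 \<le> length T3"
  shows "\<not> connected_graph (V - {u}) E"
proof
  assume connected: "connected_graph (V - {u}) E"
  have "T1 @ T2 \<noteq> []" using lengths(1) \<open>0 < p\<close> by auto
  show False
  proof (cases "T3 = []")
    case False
    with three_legs_bound[OF assms(1) connected longest legs disjoint \<open>T1 @ T2 \<noteq> []\<close>]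
    show False using lengths by linarith
  next
    case True
    have "card (insert u (set T1 \<union> set T2)) < card V"
      using card_length[of "u # T1 @ T2"] lengths True assms(2) by auto
    then have "\<not> V \<subseteq> insert u (set T1 \<union> set T2)" by (auto dest: card_mono[rotated])
    moreover have "length T1 \<le> 1" "length T2 \<le> 1" using lengths True by auto
    ultimately have "length T1 + length T2 + 1 \<le> p"
      using short_legs_bound[OF assms(1) connected longest legs(1,2) disjoint(1)] \<open>T1 @ T2 \<noteq> []\<close>
      by blast
    then show False using lengths by linarith
  qed
qed

theorem lemma4:
  fixes V :: "'a set" and E :: "'a \<Rightarrow> 'a \<Rightarrow> bool" and p :: nat and u :: 'a
    and L1 L2 L3 :: "'a list"
  assumes "graph V E" and "connected_graph V E" and "card V \<ge> 4"
    and "longest_path_length V E p"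
    and "is_path V E L1" and "is_path V E L2" and "is_path V E L3"
    and "is_endpoint u L1" and "is_endpoint u L2" and "is_endpoint u L3"
    and "set L1 \<inter> set L2 = {u}" and "set L1 \<inter> set L3 = {u}" and "set L2 \<inter> set L3 = {u}"
    and "path_len L1 = nat \<lceil>real p / 2\<rceil>"
    and "path_len L2 = p - nat \<lceil>real p / 2\<rceil>"
    and "path_len L3 \<ge> nat \<lceil>real p / 2\<rceil> - 1"
  shows "cut_vertex V E u"
proof -
  obtain T1 where T1: "is_path V E (u # T1)" "set (u # T1) = set L1" "length T1 = path_len L1"
    using is_path_from_endpoint[OF assms(1,5,8)] .
  obtain T2 where T2: "is_path V E (u # T2)" "set (u # T2) = set L2" "length T2 = path_len L2"
    using is_path_from_endpoint[OF assms(1,6,9)] .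
  obtain T3 where T3: "is_path V E (u # T3)" "set (u # T3) = set L3" "length T3 = path_len L3"
    using is_path_from_endpoint[OF assms(1,7,10)] .
  have "u \<notin> set T1" "u \<notin> set T2" "u \<notin> set T3" "u \<in> V"
    using T1(1) T2(1) T3(1) unfolding is_path_def by auto
  then have disjoint: "set T1 \<inter> set T2 = {}" "set T1 \<inter> set T3 = {}" "set T2 \<inter> set T3 = {}"
    using assms(11-13) T1(2) T2(2) T3(2) by auto
  have longest: "\<And>P. is_path V E P \<Longrightarrow> path_len P \<le> p"
    using assms(4) unfolding longest_path_length_def by blast
  have "0 < p" using longest_path_length_pos[OF assms(2) _ assms(4)] assms(3) by simp
  have "\<not> connected_graph (V - {u}) E"
    by (rule three_legs_disconnect[OF assms(1,3) \<open>0 < p\<close> longest T1(1) T2(1) T3(1) disjoint])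
      (use T1(3) T2(3) T3(3) assms(14-16) in \<open>simp_all add: nat_ceiling_half\<close>)
  moreover have "finite V" using assms(1) unfolding graph_def by blast
  moreover have "V - {u} \<noteq> {}" using assms(3) card_mono[of "{u}" V] by auto
  ultimately show ?thesis using cut_vertex_if_disconnected[OF _ assms(2) \<open>u \<in> V\<close>] by blast
qed

end
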